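(* Let $p=p(n)$ with $p/n\to y\in(0,\infty)$, and let $L=L_{T^{(s)}}$, $L(i,j)=|i-j|$. Let $\omega$ be a word of length $2k$ with $b$ distinct letters and $r+1$ even generating vertices. Then the limit $\lim_{n\to\infty}|\Pi_{S_{T^{(s)}}}(\omega)|/(p^{r+1}n^{b-r})$ exists, and it is strictly positive if and only if $\omega$ is an even word (otherwise it equals $0$).
   Context: Words: a word of length $m$ is a sequence of letters whose distinct letters first appear in alphabetical order. A word is even if each distinct letter appears an even number of times. Circuits for $S_A$ with link function $L$ (a function on pairs of positive integers): maps $\pi:\{0,\dots,2k\}\to\mathbb N$ with $\pi(0)=\pi(2k)$, $1\le\pi(2i)\le p$, $1\le\pi(2i-1)\le n$; set $\xi_\pi(2i-1)=L(\pi(2i-2),\pi(2i-1))$ and $\xi_\pi(2i)=L(\pi(2i),\pi(2i-1))$. For a word $\omega$ of length $2k$, $\Pi_{S_A}(\omega)=\{\pi:\ \omega[i]=\omega[j]\iff\xi_\pi(i)=\xi_\pi(j)\ \forall i,j\}$. The vertex $\pi(i)$ is generating if $i=0$ or $\omega[i]$ is the first occurrence of its letter; it is even if $i$ is even. *)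

theory Defs
  imports Complex_Main
begin

text \<open>Words are lists of letters (natural numbers 0,1,2,... standing for a,b,c,...).
 A word omega of length m is indexed in the paper as omega[1..m]; here omega[i] = omega ! (i-1).
 The canonical-form condition: distinct letters first appear in alphabetical order.\<close>

definition is_word :: "nat list \<Rightarrow> bool" where
  "is_word w \<longleftrightarrow> (\<forall>i < length w. w ! i \<in> set (take i w) \<or> w ! i = card (set (take i w)))"

definition even_word :: "nat list \<Rightarrow> bool" where
  "even_word w \<longleftrightarrow> (\<forall>x \<in> set w. even (count_list w x))"

definition num_letters :: "nat list \<Rightarrow> nat" where
  "num_letters w = card (set w)"

definition generating :: "nat list \<Rightarrow> nat \<Rightarrow> bool" where
  "generating w i \<longleftrightarrow> i = 0 \<or> (1 \<le> i \<and> i \<le> length w \<and> w ! (i - 1) \<notin> set (take (i - 1) w))"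

definition num_even_generating :: "nat list \<Rightarrow> nat" where
  "num_even_generating w = card {i \<in> {0..length w}. even i \<and> generating w i}"

text \<open>Circuits pc : {0..2k} \<rightarrow> N represented as lists of length 2k+1.\<close>
definition circuits :: "nat \<Rightarrow> nat \<Rightarrow> nat \<Rightarrow> nat list set" where
  "circuits p n k = {pc. length pc = 2 * k + 1 \<and> pc ! 0 = pc ! (2 * k)
      \<and> (\<forall>i \<le> k. 1 \<le> pc ! (2 * i) \<and> pc ! (2 * i) \<le> p)
      \<and> (\<forall>i \<in> {1..k}. 1 \<le> pc ! (2 * i - 1) \<and> pc ! (2 * i - 1) \<le> n)}"

definition xi :: "(nat \<Rightarrow> nat \<Rightarrow> nat) \<Rightarrow> nat list \<Rightarrow> nat \<Rightarrow> nat" where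
  "xi L pc j = (if odd j then L (pc ! (j - 1)) (pc ! j) else L (pc ! j) (pc ! (j - 1)))"

definition Pi_S :: "(nat \<Rightarrow> nat \<Rightarrow> nat) \<Rightarrow> nat \<Rightarrow> nat \<Rightarrow> nat list \<Rightarrow> nat list set" where
  "Pi_S L p n w = {pc \<in> circuits p n (length w div 2).
      \<forall>i \<in> {1..length w}. \<forall>j \<in> {1..length w}.
        (w ! (i - 1) = w ! (j - 1) \<longleftrightarrow> xi L pc i = xi L pc j)}"

definition L_T :: "nat \<Rightarrow> nat \<Rightarrow> nat" where
  "L_T i j = (if i \<le> j then j - i else i - j)"

end

theory Submission
  imports Defs "HOL-Analysis.Analysis"
begin

text \<open>A circuit in \<open>\<Pi>(\<omega>)\<close> for the link \<open>|i - j|\<close> is determined by its start \<open>\<pi>(0)\<close>, the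
 common step length \<open>z\<^sub>a\<close> of each letter \<open>a\<close>, and the directions (up or down) of its \<open>2k\<close> steps.
 Hence \<open>|\<Pi>(\<omega>)|\<close> is a sum over the \<open>b + 1\<close> integer parameters \<open>z\<close> of the number \<open>F\<^sub>n(z) \<le> 2\<^sup>2\<^sup>k\<close>
 of sign patterns whose walk closes up and stays in the strips \<open>[1,p]\<close> (even times) and \<open>[1,n]\<close>
 (odd times). Scaling \<open>z\<close> by \<open>1/n\<close> turns this into a Riemann sum: for almost every real \<open>u\<close> the
 count at \<open>\<lfloor>n u\<rfloor>\<close> is eventually the number \<open>G(u)\<close> of sign patterns whose real walk closes up and
 stays in \<open>(0,y)\<close> and \<open>(0,1)\<close>, so by dominated convergence \<open>|\<Pi>(\<omega>)| / n\<^sup>b\<^sup>+\<^sup>1 \<rightarrow> \<integral>G\<close>. As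
 \<open>p \<sim> y n\<close>, the normalisation \<open>p\<^sup>r\<^sup>+\<^sup>1 n\<^sup>b\<^sup>-\<^sup>r\<close> only divides this limit by \<open>y\<^sup>r\<^sup>+\<^sup>1\<close>.

 If \<open>\<omega>\<close> is even, the pattern alternating up and down along the occurrences of each letter is
 admissible on a box of positive measure near the origin, so \<open>\<integral>G > 0\<close>. If some letter occurs an odd
 number of times, its signed step count is odd, hence nonzero, so closing up is a nontrivial linear
 condition on \<open>u\<close>, which holds only on a null set; thus \<open>G = 0\<close> almost everywhere.\<close>


section \<open>Riemann sums on a grid\<close>

abbreviation lborel_fun :: "'i set \<Rightarrow> ('i \<Rightarrow> real) measure" where
  "lborel_fun I \<equiv> PiM I (\<lambda>_. lborel)"

lemma product_sigma_finite_lborel: "product_sigma_finite (\<lambda>_::'i. lborel :: real measure)"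
  by (simp add: product_sigma_finite_def lborel.sigma_finite_measure_axioms)

lemma AE_linear_form_neq:
  fixes c :: "'i \<Rightarrow> real"
  assumes fin: "finite I" and jI: "j \<in> I" and cj: "c j \<noteq> 0"
  shows "AE u in lborel_fun I. (\<Sum>i\<in>I. c i * u i) \<noteq> t"
proof -
  interpret product_sigma_finite "\<lambda>_::'i. lborel :: real measure"
    by (rule product_sigma_finite_lborel)
  define J where "J = I - {j}"
  have IJ: "I = insert j J" "j \<notin> J" "finite J" using jI fin by (auto simp: J_def)
  define N where "N = {u \<in> space (lborel_fun I). (\<Sum>i\<in>I. c i * u i) = t}"
  have N_sets: "N \<in> sets (lborel_fun I)" unfolding N_def by measurable
  have "emeasure (lborel_fun I) N = (\<integral>\<^sup>+ u. indicator N u \<partial>lborel_fun I)"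
    using N_sets by simp
  also have "\<dots> = (\<integral>\<^sup>+ x. (\<integral>\<^sup>+ y. indicator N (x(j := y)) \<partial>lborel) \<partial>lborel_fun J)"
    unfolding IJ(1) by (rule product_nn_integral_insert) (use IJ N_sets in auto)
  also have "\<dots> = (\<integral>\<^sup>+ x. 0 \<partial>lborel_fun J)"
  proof (intro nn_integral_cong)
    fix x assume x: "x \<in> space (lborel_fun J)"
    define y0 where "y0 = (t - (\<Sum>i\<in>J. c i * x i)) / c j"
    have "indicator N (x(j := y)) = (indicator {y0} y :: ennreal)" for y
    proof -
      have sp: "x(j := y) \<in> space (lborel_fun I)"
        using x IJ by (auto simp: space_PiM PiE_def extensional_def)
      have "(\<Sum>i\<in>I. c i * (x(j := y)) i) = c j * y + (\<Sum>i\<in>J. c i * x i)"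
        unfolding IJ(1) using IJ by (simp add: sum.insert) (intro sum.cong, auto)
      then have "x(j := y) \<in> N \<longleftrightarrow> y = y0"
        using sp cj unfolding N_def y0_def by (auto simp: field_simps)
      then show ?thesis by (simp add: indicator_def)
    qed
    then show "(\<integral>\<^sup>+ y. indicator N (x(j := y)) \<partial>lborel) = 0" by simp
  qed
  finally have "emeasure (lborel_fun I) N = 0" by simp
  then show ?thesis
    by (subst AE_iff_measurable[OF N_sets]) (auto simp: N_def)
qed

definition grid_point :: "'i set \<Rightarrow> nat \<Rightarrow> ('i \<Rightarrow> real) \<Rightarrow> 'i \<Rightarrow> int" where
  "grid_point I n u = restrict (\<lambda>i. \<lfloor>real n * u i\<rfloor>) I"

definition grid_cell :: "'i set \<Rightarrow> nat \<Rightarrow> ('i \<Rightarrow> int) \<Rightarrow> ('i \<Rightarrow> real) set" where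
  "grid_cell I n z = PiE I (\<lambda>i. {real_of_int (z i) / real n ..< (real_of_int (z i) + 1) / real n})"

lemma mem_grid_cell_iff:
  assumes "n > 0" "u \<in> space (lborel_fun I)" "z \<in> extensional I"
  shows "u \<in> grid_cell I n z \<longleftrightarrow> grid_point I n u = z"
proof -
  have "\<lfloor>real n * u i\<rfloor> = z i \<longleftrightarrow>
      real_of_int (z i) / real n \<le> u i \<and> u i < (real_of_int (z i) + 1) / real n" for i
    using assms(1) by (simp add: floor_eq_iff field_simps)
  then show ?thesis
    using assms(2,3) unfolding grid_cell_def grid_point_def
    by (auto simp: space_PiM PiE_iff extensional_def restrict_def fun_eq_iff)
qed

lemma grid_cell_sets: "finite I \<Longrightarrow> grid_cell I n z \<in> sets (lborel_fun I)"
  unfolding grid_cell_def by (intro sets_PiM_I_finite) auto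

lemma emeasure_grid_cell:
  assumes "finite I" "n > 0"
  shows "emeasure (lborel_fun I) (grid_cell I n z) = ennreal ((1 / real n) ^ card I)"
proof -
  interpret product_sigma_finite "\<lambda>_::'i. lborel :: real measure"
    by (rule product_sigma_finite_lborel)
  have "emeasure (lborel_fun I) (grid_cell I n z) =
      (\<Prod>i\<in>I. emeasure lborel {real_of_int (z i) / real n ..< (real_of_int (z i) + 1) / real n})"
    unfolding grid_cell_def using assms by (subst emeasure_PiM) auto
  also have "\<dots> = (\<Prod>i\<in>I. ennreal (1 / real n))"
    using assms by (intro prod.cong) (auto simp: field_simps diff_divide_distrib)
  finally show ?thesis by (simp add: prod_ennreal ennreal_power)
qed

lemma sum_grid_cell_indicator:
  assumes "n > 0" "u \<in> space (lborel_fun I)" "Z \<subseteq> extensional I" "finite Z"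
  shows "(\<Sum>z\<in>Z. g z * indicator (grid_cell I n z) u) =
    (if grid_point I n u \<in> Z then g (grid_point I n u) else (0::real))"
proof -
  have "(\<Sum>z\<in>Z. g z * indicator (grid_cell I n z) u) =
      (\<Sum>z\<in>Z. if z = grid_point I n u then g z else 0)"
    using assms by (intro sum.cong) (auto simp: indicator_def mem_grid_cell_iff subset_iff)
  with assms(4) show ?thesis by (simp add: sum.delta')
qed

lemma
  assumes "finite I" "n > 0" "finite Z"
  shows integrable_grid_step:
      "integrable (lborel_fun I) (\<lambda>u. \<Sum>z\<in>Z. g z * indicator (grid_cell I n z) u)"
    and integral_grid_step:
      "integral\<^sup>L (lborel_fun I) (\<lambda>u. \<Sum>z\<in>Z. g z * indicator (grid_cell I n z) u)
        = (\<Sum>z\<in>Z. g z) / real n ^ card I"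
proof -
  have fin: "emeasure (lborel_fun I) (grid_cell I n z) < \<infinity>" for z
    using emeasure_grid_cell[OF assms(1,2)] by simp
  have measure_cell: "measure (lborel_fun I) (grid_cell I n z) = 1 / real n ^ card I" for z
    using emeasure_grid_cell[OF assms(1,2)] by (simp add: measure_def power_one_over)
  have int: "integrable (lborel_fun I) (\<lambda>u. g z * indicator (grid_cell I n z) u)" for z
    using fin grid_cell_sets[OF assms(1)]
    by (intro integrable_mult_right integrable_real_indicator) auto
  show "integrable (lborel_fun I) (\<lambda>u. \<Sum>z\<in>Z. g z * indicator (grid_cell I n z) u)"
    by (rule Bochner_Integration.integrable_sum, rule int)
  have "integral\<^sup>L (lborel_fun I) (\<lambda>u. \<Sum>z\<in>Z. g z * indicator (grid_cell I n z) u)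
     = (\<Sum>z\<in>Z. integral\<^sup>L (lborel_fun I) (\<lambda>u. g z * indicator (grid_cell I n z) u))"
    by (rule Bochner_Integration.integral_sum, rule int)
  also have "\<dots> = (\<Sum>z\<in>Z. g z / real n ^ card I)"
    using fin grid_cell_sets[OF assms(1)] measure_cell by (intro sum.cong) auto
  finally show "integral\<^sup>L (lborel_fun I) (\<lambda>u. \<Sum>z\<in>Z. g z * indicator (grid_cell I n z) u)
        = (\<Sum>z\<in>Z. g z) / real n ^ card I"
    by (simp add: sum_divide_distrib)
qed

lemma grid_cell_subset_box:
  assumes "z \<in> extensional I" "\<forall>i\<in>I. 0 \<le> z i \<and> real_of_int (z i) \<le> C * real (Suc n)"
  shows "grid_cell I (Suc n) z \<subseteq> PiE I (\<lambda>_. {0..\<bar>C\<bar> + 1})"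
proof
  fix v assume v: "v \<in> grid_cell I (Suc n) z"
  have "v i \<in> {0..\<bar>C\<bar> + 1}" if i: "i \<in> I" for i
  proof -
    have z: "0 \<le> z i" "real_of_int (z i) \<le> C * real (Suc n)" using assms(2) i by auto
    have vi: "real_of_int (z i) / real (Suc n) \<le> v i" "v i < (real_of_int (z i) + 1) / real (Suc n)"
      using v i unfolding grid_cell_def by auto
    have "C * real (Suc n) \<le> \<bar>C\<bar> * real (Suc n)" by (intro mult_right_mono) auto
    moreover have "(\<bar>C\<bar> + 1) * real (Suc n) = \<bar>C\<bar> * real (Suc n) + real (Suc n)"
      by (simp add: distrib_right)
    ultimately have "real_of_int (z i) + 1 \<le> (\<bar>C\<bar> + 1) * real (Suc n)"
      using z(2) by linarith
    then have "(real_of_int (z i) + 1) / real (Suc n) \<le> \<bar>C\<bar> + 1"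
      by (simp add: field_simps)
    moreover have "0 \<le> real_of_int (z i) / real (Suc n)" using z by simp
    ultimately show ?thesis using vi by auto
  qed
  then show "v \<in> PiE I (\<lambda>_. {0..\<bar>C\<bar> + 1})" using v unfolding grid_cell_def by (auto simp: PiE_iff)
qed

lemma grid_step_le_box_indicator:
  assumes u: "u \<in> space (lborel_fun I)" and "finite Z"
    and Z_bounded: "Z \<subseteq> {z \<in> extensional I. \<forall>i\<in>I. 0 \<le> z i \<and> real_of_int (z i) \<le> C * real (Suc n)}"
    and g_bounded: "\<And>z. 0 \<le> g z \<and> g z \<le> B"
  shows "norm (\<Sum>z\<in>Z. g z * indicator (grid_cell I (Suc n) z) u)
    \<le> B * indicator (PiE I (\<lambda>_. {0..\<bar>C\<bar> + 1})) u"
proof -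
  have eq: "(\<Sum>z\<in>Z. g z * indicator (grid_cell I (Suc n) z) u) =
      (if grid_point I (Suc n) u \<in> Z then g (grid_point I (Suc n) u) else 0)"
    using u Z_bounded \<open>finite Z\<close> by (intro sum_grid_cell_indicator) auto
  show ?thesis
  proof (cases "grid_point I (Suc n) u \<in> Z")
    case False then show ?thesis unfolding eq using g_bounded[of undefined] by (simp add: indicator_def)
  next
    case True
    then have "u \<in> grid_cell I (Suc n) (grid_point I (Suc n) u)"
      using u Z_bounded by (subst mem_grid_cell_iff) auto
    moreover have "grid_cell I (Suc n) (grid_point I (Suc n) u) \<subseteq> PiE I (\<lambda>_. {0..\<bar>C\<bar> + 1})"
      using True Z_bounded by (intro grid_cell_subset_box) auto
    ultimately show ?thesis unfolding eq using True g_bounded by auto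
  qed
qed

lemma integrable_box_indicator:
  fixes B :: real
  assumes "finite I"
  shows "integrable (lborel_fun I) (\<lambda>u. B * indicator (PiE I (\<lambda>_. {a..b::real})) u)"
proof -
  interpret product_sigma_finite "\<lambda>_::'i. lborel :: real measure"
    by (rule product_sigma_finite_lborel)
  have "emeasure (lborel_fun I) (PiE I (\<lambda>_. {a..b})) = (\<Prod>i\<in>I. emeasure lborel {a..b})"
    using assms by (subst emeasure_PiM) auto
  then have "emeasure (lborel_fun I) (PiE I (\<lambda>_. {a..b})) < \<infinity>"
    by (simp add: emeasure_lborel_Icc_eq power_eq_top_ennreal less_top[symmetric])
  then show ?thesis using assms
    by (intro integrable_mult_right integrable_real_indicator sets_PiM_I_finite) auto
qed

lemma
  fixes g :: "nat \<Rightarrow> ('i \<Rightarrow> int) \<Rightarrow> real"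
  assumes fin_I: "finite I"
    and fin_Z: "\<And>n. finite (Z n)"
    and Z_bounded: "\<And>n. Z n \<subseteq> {z \<in> extensional I. \<forall>i\<in>I. 0 \<le> z i \<and> real_of_int (z i) \<le> C * real (Suc n)}"
    and g_bounded: "\<And>n z. 0 \<le> g n z \<and> g n z \<le> B"
    and G_measurable: "G \<in> borel_measurable (lborel_fun I)"
    and lim: "AE u in lborel_fun I. (\<lambda>n. if grid_point I (Suc n) u \<in> Z n
                 then g n (grid_point I (Suc n) u) else 0) \<longlonglongrightarrow> G u"
  shows integrable_grid_limit: "integrable (lborel_fun I) G"
    and grid_sum_tendsto_integral:
      "(\<lambda>n. (\<Sum>z\<in>Z n. g n z) / real (Suc n) ^ card I) \<longlonglongrightarrow> integral\<^sup>L (lborel_fun I) G"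
proof -
  define s where "s n u = (\<Sum>z\<in>Z n. g n z * indicator (grid_cell I (Suc n) z) u)" for n u
  have s_measurable: "s n \<in> borel_measurable (lborel_fun I)" for n
    using integrable_grid_step[OF fin_I _ fin_Z] unfolding s_def
    by (intro borel_measurable_integrable) auto
  have dominated: "AE u in lborel_fun I. norm (s n u) \<le> B * indicator (PiE I (\<lambda>_. {0..\<bar>C\<bar> + 1})) u"
    for n
    unfolding s_def using fin_Z Z_bounded g_bounded by (intro AE_I2 grid_step_le_box_indicator)
  have converges: "AE u in lborel_fun I. (\<lambda>n. s n u) \<longlonglongrightarrow> G u"
    using lim
  proof (rule AE_mp, intro AE_I2 impI)
    fix u assume "u \<in> space (lborel_fun I)"
      and "(\<lambda>n. if grid_point I (Suc n) u \<in> Z n then g n (grid_point I (Suc n) u) else 0) \<longlonglongrightarrow> G u"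
    then show "(\<lambda>n. s n u) \<longlonglongrightarrow> G u"
      unfolding s_def using Z_bounded fin_Z by (subst sum_grid_cell_indicator) auto
  qed
  note dominated_convergence =
    G_measurable s_measurable integrable_box_indicator[OF fin_I] converges dominated
  show "integrable (lborel_fun I) G"
    by (rule integrable_dominated_convergence[OF dominated_convergence])
  show "(\<lambda>n. (\<Sum>z\<in>Z n. g n z) / real (Suc n) ^ card I) \<longlonglongrightarrow> integral\<^sup>L (lborel_fun I) G"
    using integral_dominated_convergence[OF dominated_convergence]
    unfolding s_def integral_grid_step[OF fin_I zero_less_Suc fin_Z] .
qed


section \<open>Circuits for the link \<open>|i - j|\<close>\<close>

definition step_length :: "nat list \<Rightarrow> nat \<Rightarrow> int" where
  "step_length pc t = \<bar>int (pc ! Suc t) - int (pc ! t)\<bar>"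

lemma int_xi_L_T: "1 \<le> j \<Longrightarrow> int (xi L_T pc j) = step_length pc (j - 1)"
  by (cases j) (auto simp: xi_def L_T_def step_length_def)

lemma circuits_iff:
  "pc \<in> circuits P N k \<longleftrightarrow> length pc = 2 * k + 1 \<and> pc ! 0 = pc ! (2 * k) \<and>
     (\<forall>j \<le> 2 * k. 1 \<le> pc ! j \<and> pc ! j \<le> (if even j then P else N))"
proof -
  have "(\<forall>i \<le> k. 1 \<le> pc ! (2 * i) \<and> pc ! (2 * i) \<le> P) \<and>
      (\<forall>i \<in> {1..k}. 1 \<le> pc ! (2 * i - 1) \<and> pc ! (2 * i - 1) \<le> N) \<longleftrightarrow>
      (\<forall>j \<le> 2 * k. 1 \<le> pc ! j \<and> pc ! j \<le> (if even j then P else N))"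
  proof safe
    fix j assume even: "\<forall>i \<le> k. 1 \<le> pc ! (2 * i) \<and> pc ! (2 * i) \<le> P"
      and odd: "\<forall>i \<in> {1..k}. 1 \<le> pc ! (2 * i - 1) \<and> pc ! (2 * i - 1) \<le> N" and j: "j \<le> 2 * k"
    have "1 \<le> pc ! j \<and> pc ! j \<le> (if even j then P else N)"
    proof (cases "even j")
      case True
      then obtain i where "j = 2 * i" by blast
      then show ?thesis using even j True by auto
    next
      case False
      then obtain i where "j = 2 * i + 1" by (blast elim: oddE)
      then have i: "j = 2 * Suc i - 1" by simp
      then have "Suc i \<in> {1..k}" using j by auto
      then show ?thesis using odd i False by force
    qed
    then show "1 \<le> pc ! j" "pc ! j \<le> (if even j then P else N)" by auto
  next
    fix i assume "\<forall>j\<le>2 * k. 1 \<le> pc ! j \<and> pc ! j \<le> (if even j then P else N)"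
    then show "i \<le> k \<Longrightarrow> 1 \<le> pc ! (2 * i)" "i \<le> k \<Longrightarrow> pc ! (2 * i) \<le> P"
      "i \<in> {1..k} \<Longrightarrow> 1 \<le> pc ! (2 * i - 1)" "i \<in> {1..k} \<Longrightarrow> pc ! (2 * i - 1) \<le> N"
      by (auto dest: spec[of _ "2 * i"] spec[of _ "2 * i - 1"])
  qed
  then show ?thesis unfolding circuits_def by auto
qed

lemma Pi_S_L_T_iff:
  assumes "even (length w)"
  shows "pc \<in> Pi_S L_T P N w \<longleftrightarrow> length pc = length w + 1 \<and> pc ! 0 = pc ! length w \<and>
     (\<forall>j \<le> length w. 1 \<le> pc ! j \<and> pc ! j \<le> (if even j then P else N)) \<and>
     (\<forall>t < length w. \<forall>t' < length w. w ! t = w ! t' \<longleftrightarrow> step_length pc t = step_length pc t')"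
proof -
  have xi_eq_iff: "xi L_T pc i = xi L_T pc j \<longleftrightarrow> step_length pc (i - 1) = step_length pc (j - 1)"
    if "1 \<le> i" "1 \<le> j" for i j
    using int_xi_L_T[OF that(1), of pc] int_xi_L_T[OF that(2), of pc] by linarith
  have "(\<forall>i \<in> {1..length w}. \<forall>j \<in> {1..length w}.
        (w ! (i - 1) = w ! (j - 1) \<longleftrightarrow> xi L_T pc i = xi L_T pc j)) \<longleftrightarrow>
      (\<forall>i \<in> {1..length w}. \<forall>j \<in> {1..length w}.
        (w ! (i - 1) = w ! (j - 1) \<longleftrightarrow> step_length pc (i - 1) = step_length pc (j - 1)))"
    using xi_eq_iff by auto
  also have "\<dots> \<longleftrightarrow>
      (\<forall>t < length w. \<forall>t' < length w. w ! t = w ! t' \<longleftrightarrow> step_length pc t = step_length pc t')"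
  proof -
    have "{1..length w} = Suc ` {..<length w}" by (simp add: image_Suc_lessThan)
    then show ?thesis by auto
  qed
  finally show ?thesis
    using assms unfolding Pi_S_def circuits_iff by (auto elim!: evenE)
qed


section \<open>Decomposition by step lengths\<close>

definition first_occ :: "nat list \<Rightarrow> nat \<Rightarrow> nat" where
  "first_occ w a = (LEAST t. t < length w \<and> w ! t = a)"

text \<open>The profile of a circuit records its start (index \<open>None\<close>) and the step length of each
 letter \<open>a\<close> (index \<open>Some a\<close>).\<close>

definition profile_index :: "nat list \<Rightarrow> nat option set" where
  "profile_index w = insert None (Some ` set w)"

definition profile :: "nat list \<Rightarrow> nat list \<Rightarrow> nat option \<Rightarrow> int" where
  "profile w pc = restrict (\<lambda>i. case i of None \<Rightarrow> int (pc ! 0)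
      | Some a \<Rightarrow> step_length pc (first_occ w a)) (profile_index w)"

definition profile_fibre :: "nat list \<Rightarrow> nat \<Rightarrow> nat \<Rightarrow> (nat option \<Rightarrow> int) \<Rightarrow> nat list set" where
  "profile_fibre w P N z = {pc \<in> Pi_S L_T P N w. profile w pc = z}"

definition ascents :: "nat list \<Rightarrow> nat list \<Rightarrow> bool list" where
  "ascents w pc = map (\<lambda>t. pc ! t \<le> pc ! Suc t) [0..<length w]"

lemma first_occ: "a \<in> set w \<Longrightarrow> first_occ w a < length w \<and> w ! first_occ w a = a"
  unfolding first_occ_def by (rule LeastI_ex) (auto simp: in_set_conv_nth)

lemma finite_profile_index: "finite (profile_index w)"
  by (simp add: profile_index_def)

lemma card_profile_index: "card (profile_index w) = Suc (card (set w))"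
  unfolding profile_index_def by (simp add: card_image image_iff)

context
  fixes w :: "nat list"
  assumes even_length: "even (length w)"
begin

lemma finite_Pi_S: "finite (Pi_S L_T P N w)"
proof (rule finite_subset)
  show "Pi_S L_T P N w \<subseteq> {xs. set xs \<subseteq> {..max P N} \<and> length xs = length w + 1}"
  proof
    fix pc assume pc: "pc \<in> Pi_S L_T P N w"
    have "x \<le> max P N" if x: "x \<in> set pc" for x
    proof -
      obtain j where j: "j < length pc" "x = pc ! j" using x by (auto simp: in_set_conv_nth)
      moreover have "length pc = length w + 1" using pc by (simp add: Pi_S_L_T_iff[OF even_length])
      ultimately have "pc ! j \<le> (if even j then P else N)"
        using pc unfolding Pi_S_L_T_iff[OF even_length] by simp
      then show ?thesis using j by (auto split: if_splits)
    qed
    then show "pc \<in> {xs. set xs \<subseteq> {..max P N} \<and> length xs = length w + 1}"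
      using pc by (auto simp: Pi_S_L_T_iff[OF even_length])
  qed
qed (rule finite_lists_length_eq, simp)

lemma card_Pi_S_eq_sum_fibres:
  "card (Pi_S L_T P N w) = (\<Sum>z \<in> profile w ` Pi_S L_T P N w. card (profile_fibre w P N z))"
proof -
  have "card (Pi_S L_T P N w) = (\<Sum>pc \<in> Pi_S L_T P N w. 1)" by simp
  also have "\<dots> = (\<Sum>z \<in> profile w ` Pi_S L_T P N w. \<Sum>pc \<in> {pc \<in> Pi_S L_T P N w. profile w pc = z}. 1)"
    by (rule sum.group[symmetric]) (auto simp: finite_Pi_S)
  finally show ?thesis unfolding profile_fibre_def by simp
qed

lemma
  assumes "pc \<in> profile_fibre w P N z"
  shows profile_fibre_start: "int (pc ! 0) = z None"
    and profile_fibre_step_length: "t < length w \<Longrightarrow> step_length pc t = z (Some (w ! t))"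
proof -
  have pc: "pc \<in> Pi_S L_T P N w" "profile w pc = z" using assms by (auto simp: profile_fibre_def)
  show "int (pc ! 0) = z None" using pc(2) by (auto simp: profile_def profile_index_def)
  assume t: "t < length w"
  have "step_length pc t = step_length pc (first_occ w (w ! t))"
    using first_occ[of "w ! t" w] t pc(1) unfolding Pi_S_L_T_iff[OF even_length] by auto
  then show "step_length pc t = z (Some (w ! t))"
    using pc(2) t by (auto simp: profile_def profile_index_def)
qed

lemma profile_fibre_step:
  "pc \<in> profile_fibre w P N z \<Longrightarrow> t < length w \<Longrightarrow>
   int (pc ! Suc t) = int (pc ! t) + (if pc ! t \<le> pc ! Suc t then 1 else -1) * z (Some (w ! t))"
  using profile_fibre_step_length[of pc P N z t] unfolding step_length_def by auto

lemma profile_bounded: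
  assumes "z \<in> profile w ` Pi_S L_T P N w"
  shows "z \<in> extensional (profile_index w) \<and> (\<forall>i \<in> profile_index w. 0 \<le> z i \<and> z i \<le> int (max P N))"
proof -
  obtain pc where pc: "pc \<in> Pi_S L_T P N w" "z = profile w pc" using assms by auto
  have bounds: "1 \<le> pc ! j \<and> pc ! j \<le> max P N" if "j \<le> length w" for j
    using pc(1) that unfolding Pi_S_L_T_iff[OF even_length] by (auto split: if_splits)
  have "0 \<le> z i \<and> z i \<le> int (max P N)" if i: "i \<in> profile_index w" for i
  proof (cases i)
    case None then show ?thesis using pc bounds[of 0] i by (auto simp: profile_def)
  next
    case (Some a)
    then have "first_occ w a < length w" using i first_occ by (auto simp: profile_index_def)
    then show ?thesis using Some i pc bounds[of "first_occ w a"] bounds[of "Suc (first_occ w a)"]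
      by (auto simp: profile_def step_length_def)
  qed
  then show ?thesis using pc by (auto simp: profile_def)
qed

lemma profile_fibre_determined_by_ascents:
  assumes "pc \<in> profile_fibre w P N z" "pc' \<in> profile_fibre w P N z" "ascents w pc = ascents w pc'"
  shows "pc = pc'"
proof (rule nth_equalityI)
  show "length pc = length pc'"
    using assms(1,2) unfolding profile_fibre_def Pi_S_L_T_iff[OF even_length] by auto
  have "j \<le> length w \<Longrightarrow> pc ! j = pc' ! j" for j
  proof (induction j)
    case 0 then show ?case
      using profile_fibre_start[OF assms(1)] profile_fibre_start[OF assms(2)] by simp
  next
    case (Suc j)
    then have "(pc ! j \<le> pc ! Suc j) = (pc' ! j \<le> pc' ! Suc j)"
      using arg_cong[OF assms(3), of "\<lambda>s. s ! j"] by (simp add: ascents_def)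
    then have "int (pc ! Suc j) = int (pc' ! Suc j)"
      using profile_fibre_step[OF assms(1), of j] profile_fibre_step[OF assms(2), of j] Suc by auto
    then show ?case by simp
  qed
  then show "i < length pc \<Longrightarrow> pc ! i = pc' ! i" for i
    using assms(1) unfolding profile_fibre_def Pi_S_L_T_iff[OF even_length] by auto
qed

lemma card_profile_fibre_le: "card (profile_fibre w P N z) \<le> 2 ^ length w"
proof -
  have "inj_on (ascents w) (profile_fibre w P N z)"
    using profile_fibre_determined_by_ascents by (auto simp: inj_on_def)
  moreover have "ascents w ` profile_fibre w P N z \<subseteq> {s. length s = length w}"
    by (auto simp: ascents_def)
  moreover have "finite {s :: bool list. length s = length w}"
    using finite_lists_length_eq[of "UNIV :: bool set"] by simp
  ultimately have "card (profile_fibre w P N z) \<le> card {s :: bool list. length s = length w}"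
    by (rule card_inj_on_le)
  then show ?thesis using card_lists_length_eq[of "UNIV :: bool set" "length w"] by simp
qed

end


section \<open>Sign patterns\<close>

definition step_sign :: "bool \<Rightarrow> int" where
  "step_sign b = (if b then 1 else -1)"

definition lattice_walk :: "nat list \<Rightarrow> (nat option \<Rightarrow> int) \<Rightarrow> bool list \<Rightarrow> nat \<Rightarrow> int" where
  "lattice_walk w z s j = z None + (\<Sum>t<j. step_sign (s ! t) * z (Some (w ! t)))"

definition admissible :: "nat list \<Rightarrow> nat \<Rightarrow> nat \<Rightarrow> (nat option \<Rightarrow> int) \<Rightarrow> bool list \<Rightarrow> bool" where
  "admissible w P N z s \<longleftrightarrow> length s = length w \<and>
     (\<Sum>t<length w. step_sign (s ! t) * z (Some (w ! t))) = 0 \<and>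
     (\<forall>j \<le> length w. 1 \<le> lattice_walk w z s j \<and> lattice_walk w z s j \<le> int (if even j then P else N))"

definition walk_circuit :: "nat list \<Rightarrow> (nat option \<Rightarrow> int) \<Rightarrow> bool list \<Rightarrow> nat list" where
  "walk_circuit w z s = map (\<lambda>j. nat (lattice_walk w z s j)) [0..<Suc (length w)]"

lemma lattice_walk_Suc:
  "lattice_walk w z s (Suc j) = lattice_walk w z s j + step_sign (s ! j) * z (Some (w ! j))"
  by (simp add: lattice_walk_def)

lemma nth_walk_circuit:
  "admissible w P N z s \<Longrightarrow> j \<le> length w \<Longrightarrow> int (walk_circuit w z s ! j) = lattice_walk w z s j"
  by (auto simp: walk_circuit_def admissible_def nth_map simp del: upt_Suc)

lemma inj_on_walk_circuit:
  assumes "\<forall>a \<in> set w. 1 \<le> z (Some a)"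
  shows "inj_on (walk_circuit w z) {s. admissible w P N z s}"
proof (rule inj_onI)
  fix s s' assume s: "s \<in> {s. admissible w P N z s}" and s': "s' \<in> {s. admissible w P N z s}"
    and eq: "walk_circuit w z s = walk_circuit w z s'"
  have walk_eq: "lattice_walk w z s j = lattice_walk w z s' j" if "j \<le> length w" for j
    using nth_walk_circuit[of w P N z s j] nth_walk_circuit[of w P N z s' j] s s' eq that by simp
  have "s ! t = s' ! t" if t: "t < length w" for t
  proof -
    have "step_sign (s ! t) * z (Some (w ! t)) = step_sign (s' ! t) * z (Some (w ! t))"
      using walk_eq[of t] walk_eq[of "Suc t"] t lattice_walk_Suc[of w z s t] lattice_walk_Suc[of w z s' t]
      by simp
    moreover have "z (Some (w ! t)) \<ge> 1" using assms t by auto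
    ultimately show ?thesis by (auto simp: step_sign_def split: if_splits)
  qed
  then show "s = s'" using s s' unfolding admissible_def by (intro nth_equalityI) auto
qed

context
  fixes w :: "nat list"
  assumes even_length: "even (length w)"
begin

lemma walk_circuit_in_profile_fibre:
  assumes z: "z \<in> extensional (profile_index w)" "\<forall>a \<in> set w. 1 \<le> z (Some a)"
    and inj: "inj_on (\<lambda>a. z (Some a)) (set w)" and s: "admissible w P N z s"
  shows "walk_circuit w z s \<in> profile_fibre w P N z"
proof -
  define pc where "pc = walk_circuit w z s"
  have pc_nth: "int (pc ! j) = lattice_walk w z s j" if "j \<le> length w" for j
    unfolding pc_def by (rule nth_walk_circuit[OF s that])
  have step: "step_length pc t = z (Some (w ! t))" if t: "t < length w" for t
  proof -
    have "0 \<le> z (Some (w ! t))" using z(2) t by (meson nth_mem order_trans zero_le_one)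
    then show ?thesis
      using pc_nth[of t] pc_nth[of "Suc t"] t lattice_walk_Suc[of w z s t]
      by (simp add: step_length_def step_sign_def)
  qed
  have "lattice_walk w z s (length w) = lattice_walk w z s 0"
    using s unfolding admissible_def lattice_walk_def by simp
  then have "pc ! 0 = pc ! length w" using pc_nth[of 0] pc_nth[of "length w"] by simp
  moreover have "1 \<le> pc ! j \<and> pc ! j \<le> (if even j then P else N)" if "j \<le> length w" for j
    using s that pc_nth[OF that] unfolding admissible_def by fastforce
  moreover have "w ! t = w ! t' \<longleftrightarrow> step_length pc t = step_length pc t'"
    if "t < length w" "t' < length w" for t t'
    using step inj that unfolding inj_on_def by (auto simp: in_set_conv_nth) (metis nth_mem)
  moreover have "length pc = length w + 1" by (simp add: pc_def walk_circuit_def)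
  ultimately have pc: "pc \<in> Pi_S L_T P N w" by (simp add: Pi_S_L_T_iff[OF even_length])
  have "profile w pc i = z i" for i
  proof (cases "i \<in> profile_index w")
    case False then show ?thesis using z(1) by (simp add: profile_def extensional_def)
  next
    case True
    show ?thesis
    proof (cases i)
      case None then show ?thesis using True pc_nth[of 0] by (simp add: profile_def lattice_walk_def)
    next
      case (Some a)
      then have "a \<in> set w" using True by (auto simp: profile_index_def)
      then show ?thesis using Some True step first_occ by (simp add: profile_def)
    qed
  qed
  with pc show ?thesis unfolding profile_fibre_def pc_def by auto
qed

lemma
  assumes pc: "pc \<in> profile_fibre w P N z"
  shows admissible_ascents: "admissible w P N z (ascents w pc)"
    and walk_circuit_ascents: "walk_circuit w z (ascents w pc) = pc"
proof -
  have pc_S: "pc \<in> Pi_S L_T P N w" using pc unfolding profile_fibre_def by simp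
  have walk: "lattice_walk w z (ascents w pc) j = int (pc ! j)" if "j \<le> length w" for j
    using that
  proof (induction j)
    case 0 then show ?case using profile_fibre_start[OF even_length pc] by (simp add: lattice_walk_def)
  next
    case (Suc j)
    then show ?case
      using lattice_walk_Suc[of w z "ascents w pc" j] profile_fibre_step[OF even_length pc, of j]
      by (simp add: ascents_def step_sign_def)
  qed
  have "(\<Sum>t<length w. step_sign (ascents w pc ! t) * z (Some (w ! t))) =
      lattice_walk w z (ascents w pc) (length w) - lattice_walk w z (ascents w pc) 0"
    by (simp add: lattice_walk_def)
  also have "\<dots> = 0" using walk[of 0] walk[of "length w"] pc_S Pi_S_L_T_iff[OF even_length] by simp
  finally show "admissible w P N z (ascents w pc)"
    unfolding admissible_def using walk pc_S Pi_S_L_T_iff[OF even_length] by (auto simp: ascents_def)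
  show "walk_circuit w z (ascents w pc) = pc"
    using pc_S walk by (intro nth_equalityI)
      (auto simp: walk_circuit_def Pi_S_L_T_iff[OF even_length] nth_map simp del: upt_Suc)
qed

lemma card_profile_fibre_eq:
  assumes "z \<in> extensional (profile_index w)" "\<forall>a \<in> set w. 1 \<le> z (Some a)"
    and "inj_on (\<lambda>a. z (Some a)) (set w)"
  shows "card (profile_fibre w P N z) = card {s. admissible w P N z s}"
proof -
  have "bij_betw (walk_circuit w z) {s. admissible w P N z s} (profile_fibre w P N z)"
    unfolding bij_betw_def
  proof
    show "inj_on (walk_circuit w z) {s. admissible w P N z s}"
      by (rule inj_on_walk_circuit) (use assms in auto)
    show "walk_circuit w z ` {s. admissible w P N z s} = profile_fibre w P N z"
      using walk_circuit_in_profile_fibre[OF assms] admissible_ascents walk_circuit_ascents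
      by (auto intro!: image_eqI[OF sym])
  qed
  then show ?thesis by (rule bij_betw_same_card[symmetric])
qed

end

lemma sum_group_by_letter:
  fixes f :: "nat \<Rightarrow> 'b::comm_ring_1"
  assumes "j \<le> length w"
  shows "(\<Sum>t<j. f t * v (w ! t)) = (\<Sum>a\<in>set w. (\<Sum>t \<in> {t. t < j \<and> w ! t = a}. f t) * v a)"
proof -
  have "(\<Sum>t<j. f t * v (w ! t)) = (\<Sum>a\<in>set w. \<Sum>t \<in> {t \<in> {..<j}. w ! t = a}. f t * v (w ! t))"
    using assms by (intro sum.group[symmetric]) auto
  also have "\<dots> = (\<Sum>a\<in>set w. (\<Sum>t \<in> {t. t < j \<and> w ! t = a}. f t) * v a)"
    by (intro sum.cong refl) (auto simp: sum_distrib_right intro!: sum.cong)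
  finally show ?thesis .
qed

definition letter_balance :: "nat list \<Rightarrow> bool list \<Rightarrow> nat \<Rightarrow> int" where
  "letter_balance w s a = (\<Sum>t \<in> {t. t < length w \<and> w ! t = a}. step_sign (s ! t))"

lemma even_sum_plus_minus_one:
  fixes f :: "'a \<Rightarrow> int"
  assumes "finite T" "\<forall>t\<in>T. f t = 1 \<or> f t = -1"
  shows "even (sum f T + int (card T))"
  using assms
proof (induction T rule: finite_induct)
  case (insert x F)
  then have "sum f (insert x F) + int (card (insert x F)) = (f x + 1) + (sum f F + int (card F))"
    by simp
  moreover have "even (f x + 1)" using insert by auto
  ultimately show ?case using insert by simp
qed simp

lemma letter_balance_neq_0_if_odd: "odd (count_list w a) \<Longrightarrow> letter_balance w s a \<noteq> 0"
proof
  assume odd: "odd (count_list w a)" and zero: "letter_balance w s a = 0"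
  have "card {t. t < length w \<and> w ! t = a} = count_list w a"
    by (simp add: count_list_eq_length_filter length_filter_conv_card eq_commute)
  moreover have "even (letter_balance w s a + int (card {t. t < length w \<and> w ! t = a}))"
    unfolding letter_balance_def by (rule even_sum_plus_minus_one) (auto simp: step_sign_def)
  ultimately show False using odd zero by simp
qed

definition alternating_signs :: "nat list \<Rightarrow> bool list" where
  "alternating_signs w = map (\<lambda>t. even (count_list (take t w) (w ! t))) [0..<length w]"

lemma length_alternating_signs: "length (alternating_signs w) = length w"
  by (simp add: alternating_signs_def)

lemma partial_balance_alternating_signs:
  assumes "j \<le> length w"
  shows "(\<Sum>t \<in> {t. t < j \<and> w ! t = a}. step_sign (alternating_signs w ! t)) =
    (if odd (count_list (take j w) a) then 1 else 0)"
  using assms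
proof (induction j)
  case (Suc j)
  then have j: "j < length w" by simp
  have take_Suc: "take (Suc j) w = take j w @ [w ! j]" using j by (simp add: take_Suc_conv_app_nth)
  show ?case
  proof (cases "w ! j = a")
    case True
    have "{t. t < Suc j \<and> w ! t = a} = insert j {t. t < j \<and> w ! t = a}" using True by auto
    then show ?thesis using Suc j True take_Suc by (simp add: alternating_signs_def step_sign_def)
  next
    case False
    have "{t. t < Suc j \<and> w ! t = a} = {t. t < j \<and> w ! t = a}" using False less_Suc_eq by auto
    then show ?thesis using Suc j False take_Suc by simp
  qed
qed simp

lemma letter_balance_alternating_signs:
  "even_word w \<Longrightarrow> letter_balance w (alternating_signs w) a = 0"
  using partial_balance_alternating_signs[of "length w" w a]
  by (cases "a \<in> set w") (auto simp: letter_balance_def even_word_def count_list_0_iff)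


section \<open>Scaling limits\<close>

lemma floor_scaled_tendsto: "(\<lambda>n. real_of_int \<lfloor>real (Suc n) * x\<rfloor> / real (Suc n)) \<longlonglongrightarrow> x"
proof (rule tendsto_sandwich[of "\<lambda>n. x - inverse (real (Suc n))" _ _ "\<lambda>n. x"])
  show "\<forall>\<^sub>F n in sequentially. x - inverse (real (Suc n)) \<le> real_of_int \<lfloor>real (Suc n) * x\<rfloor> / real (Suc n)"
  proof (intro always_eventually allI)
    fix n
    have "real (Suc n) * x - 1 \<le> real_of_int \<lfloor>real (Suc n) * x\<rfloor>" by linarith
    then have "(real (Suc n) * x - 1) / real (Suc n) \<le> real_of_int \<lfloor>real (Suc n) * x\<rfloor> / real (Suc n)"
      by (intro divide_right_mono) auto
    then show "x - inverse (real (Suc n)) \<le> real_of_int \<lfloor>real (Suc n) * x\<rfloor> / real (Suc n)"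
      by (simp add: field_simps del: of_nat_Suc)
  qed
  show "\<forall>\<^sub>F n in sequentially. real_of_int \<lfloor>real (Suc n) * x\<rfloor> / real (Suc n) \<le> x"
  proof (intro always_eventually allI)
    fix n
    have "real_of_int \<lfloor>real (Suc n) * x\<rfloor> \<le> real (Suc n) * x" by linarith
    then show "real_of_int \<lfloor>real (Suc n) * x\<rfloor> / real (Suc n) \<le> x" by (simp add: field_simps)
  qed
  show "(\<lambda>n. x - inverse (real (Suc n))) \<longlonglongrightarrow> x"
    using tendsto_diff[OF tendsto_const LIMSEQ_inverse_real_of_nat, of x] by simp
qed simp

lemma grid_point_scaled_tendsto:
  "i \<in> I \<Longrightarrow> (\<lambda>n. real_of_int (grid_point I (Suc n) u i) / real (Suc n)) \<longlonglongrightarrow> u i"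
  using floor_scaled_tendsto[of "u i"] by (simp add: grid_point_def)

context
  fixes a :: "nat \<Rightarrow> int" and \<alpha> :: real
  assumes scaled: "(\<lambda>n. real_of_int (a n) / real (Suc n)) \<longlonglongrightarrow> \<alpha>"
begin

lemma eventually_scaled_pos: "\<alpha> > 0 \<Longrightarrow> eventually (\<lambda>n. a n > 0) sequentially"
  by (drule order_tendstoD(1)[OF scaled]) (auto elim: eventually_mono simp: zero_less_divide_iff)

lemma eventually_scaled_neg: "\<alpha> < 0 \<Longrightarrow> eventually (\<lambda>n. a n < 0) sequentially"
  by (drule order_tendstoD(2)[OF scaled]) (auto elim: eventually_mono simp: divide_less_0_iff)

lemma eventually_scaled_nonpos_iff: "\<alpha> \<noteq> 0 \<Longrightarrow> eventually (\<lambda>n. a n \<le> 0 \<longleftrightarrow> \<alpha> < 0) sequentially"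
  using eventually_scaled_pos eventually_scaled_neg
  by (cases "\<alpha> > 0") (auto elim: eventually_mono)

lemma eventually_scaled_neq_0: "\<alpha> \<noteq> 0 \<Longrightarrow> eventually (\<lambda>n. a n \<noteq> 0) sequentially"
  using eventually_scaled_pos eventually_scaled_neg
  by (cases "\<alpha> > 0") (auto elim: eventually_mono)

end


lemma linear_bound_of_scaled_tendsto:
  fixes p :: "nat \<Rightarrow> nat"
  assumes "(\<lambda>n. real (p (Suc n)) / real (Suc n)) \<longlonglongrightarrow> y"
  obtains C where "\<And>n. real (max (p (Suc n)) (Suc n)) \<le> C * real (Suc n)"
proof -
  have "Bseq (\<lambda>n. real (p (Suc n)) / real (Suc n))"
    using assms by (intro convergent_imp_Bseq convergentI)
  then obtain B where B: "\<And>n. norm (real (p (Suc n)) / real (Suc n)) \<le> B" by (rule BseqE) blast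
  have "real (max (p (Suc n)) (Suc n)) \<le> max B 1 * real (Suc n)" for n
  proof -
    have "real (p (Suc n)) / real (Suc n) \<le> max B 1" using B[of n] by auto
    then have "real (p (Suc n)) \<le> max B 1 * real (Suc n)" by (simp add: field_simps del: of_nat_Suc)
    moreover have "real (Suc n) \<le> max B 1 * real (Suc n)"
      using mult_right_mono[of 1 "max B 1" "real (Suc n)"] by simp
    ultimately show ?thesis by (simp only: of_nat_max max.bounded_iff)
  qed
  then show ?thesis by (rule that)
qed


section \<open>The limit density\<close>

definition real_walk :: "nat list \<Rightarrow> (nat option \<Rightarrow> real) \<Rightarrow> bool list \<Rightarrow> nat \<Rightarrow> real" where
  "real_walk w u s j = u None + (\<Sum>t<j. real_of_int (step_sign (s ! t)) * u (Some (w ! t)))"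

definition real_displacement :: "nat list \<Rightarrow> (nat option \<Rightarrow> real) \<Rightarrow> bool list \<Rightarrow> real" where
  "real_displacement w u s = (\<Sum>t<length w. real_of_int (step_sign (s ! t)) * u (Some (w ! t)))"

definition real_admissible :: "nat list \<Rightarrow> real \<Rightarrow> (nat option \<Rightarrow> real) \<Rightarrow> bool list \<Rightarrow> bool" where
  "real_admissible w y u s \<longleftrightarrow> length s = length w \<and> real_displacement w u s = 0 \<and>
     (\<forall>j \<le> length w. 0 < real_walk w u s j \<and> real_walk w u s j < (if even j then y else 1))"

definition limit_count :: "nat list \<Rightarrow> real \<Rightarrow> (nat option \<Rightarrow> real) \<Rightarrow> real" where
  "limit_count w y u =
    (if \<forall>a\<in>set w. 0 < u (Some a) then real (card {s. real_admissible w y u s}) else 0)"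

definition sign_patterns :: "nat list \<Rightarrow> bool list set" where
  "sign_patterns w = {s. length s = length w}"

text \<open>The points at which the scaled fibre counts stabilise; the complement is contained in finitely
 many affine hyperplanes.\<close>

definition generic_point :: "nat list \<Rightarrow> real \<Rightarrow> (nat option \<Rightarrow> real) \<Rightarrow> bool" where
  "generic_point w y u \<longleftrightarrow> (\<forall>a\<in>set w. u (Some a) \<noteq> 0) \<and>
     (\<forall>a\<in>set w. \<forall>a'\<in>set w. a \<noteq> a' \<longrightarrow> u (Some a) \<noteq> u (Some a')) \<and>
     (\<forall>s \<in> sign_patterns w. (\<exists>a\<in>set w. letter_balance w s a \<noteq> 0) \<longrightarrow> real_displacement w u s \<noteq> 0) \<and>
     (\<forall>s \<in> sign_patterns w. \<forall>j \<le> length w.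
        real_walk w u s j \<noteq> 0 \<and> real_walk w u s j \<noteq> (if even j then y else 1))"

lemma finite_sign_patterns: "finite (sign_patterns w)"
  unfolding sign_patterns_def using finite_lists_length_eq[of "UNIV :: bool set" "length w"] by simp

lemma real_walk_eq_sum_letters:
  assumes "j \<le> length w"
  shows "real_walk w u s j = 1 * u None +
    (\<Sum>a\<in>set w. real_of_int (\<Sum>t \<in> {t. t < j \<and> w ! t = a}. step_sign (s ! t)) * u (Some a))"
  unfolding real_walk_def
  using sum_group_by_letter[OF assms, of "\<lambda>t. real_of_int (step_sign (s ! t))" "\<lambda>a. u (Some a)"]
  by simp

lemma real_displacement_eq_sum_letters:
  "real_displacement w u s = 0 * u None + (\<Sum>a\<in>set w. real_of_int (letter_balance w s a) * u (Some a))"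
  unfolding real_displacement_def letter_balance_def
  using sum_group_by_letter[of "length w" w "\<lambda>t. real_of_int (step_sign (s ! t))" "\<lambda>a. u (Some a)"]
  by simp

lemma AE_profile_form_neq:
  fixes c :: "nat option \<Rightarrow> real"
  assumes "c None \<noteq> 0 \<or> (\<exists>a\<in>set w. c (Some a) \<noteq> 0)"
  shows "AE u in lborel_fun (profile_index w).
    c None * u None + (\<Sum>a\<in>set w. c (Some a) * u (Some a)) \<noteq> t"
proof -
  have split: "(\<Sum>i\<in>profile_index w. c i * u i) = c None * u None + (\<Sum>a\<in>set w. c (Some a) * u (Some a))"
    for u :: "nat option \<Rightarrow> real"
    unfolding profile_index_def by (simp add: sum.reindex)
  obtain j where "j \<in> profile_index w" "c j \<noteq> 0" using assms by (auto simp: profile_index_def)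
  with AE_linear_form_neq[of "profile_index w" j c t] finite_profile_index show ?thesis
    by (simp add: split)
qed

context
  fixes w :: "nat list"
begin

lemma AE_letter_length_neq_0: "AE u in lborel_fun (profile_index w). \<forall>a\<in>set w. u (Some a) \<noteq> 0"
proof (subst AE_finite_all, simp, intro ballI)
  fix a assume a: "a \<in> set w"
  let ?c = "\<lambda>i. if i = Some a then 1 else 0 :: real"
  have "?c None * u None + (\<Sum>a'\<in>set w. ?c (Some a') * u (Some a')) = u (Some a)" for u
  proof -
    have "(\<Sum>a'\<in>set w. ?c (Some a') * u (Some a')) = (\<Sum>a'\<in>set w. if a' = a then u (Some a) else 0)"
      by (intro sum.cong) auto
    then show ?thesis using a by simp
  qed
  with AE_profile_form_neq[of ?c w 0] a show "AE u in lborel_fun (profile_index w). u (Some a) \<noteq> 0"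
    by auto
qed

lemma AE_letter_lengths_distinct:
  "AE u in lborel_fun (profile_index w). \<forall>a\<in>set w. \<forall>a'\<in>set w. a \<noteq> a' \<longrightarrow> u (Some a) \<noteq> u (Some a')"
proof (subst AE_finite_all, simp, intro ballI, subst AE_finite_all, simp, intro ballI impI)
  fix a a' assume a: "a \<in> set w" "a' \<in> set w"
  show "AE u in lborel_fun (profile_index w). a \<noteq> a' \<longrightarrow> u (Some a) \<noteq> u (Some a')"
  proof (cases "a = a'")
    case False
    define c where "c = (\<lambda>i. if i = Some a then 1 else if i = Some a' then -1 else 0 :: real)"
    have eq: "c None * u None + (\<Sum>b\<in>set w. c (Some b) * u (Some b)) = u (Some a) - u (Some a')" for u
    proof -
      have "(\<Sum>b\<in>set w. c (Some b) * u (Some b)) =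
          (\<Sum>b\<in>set w. (if b = a then u (Some a) else 0) - (if b = a' then u (Some a') else 0))"
        using False by (intro sum.cong) (auto simp: c_def)
      then show ?thesis using a by (simp add: sum_subtractf c_def)
    qed
    have "AE u in lborel_fun (profile_index w). c None * u None + (\<Sum>b\<in>set w. c (Some b) * u (Some b)) \<noteq> 0"
      by (rule AE_profile_form_neq) (use a(1) in \<open>auto simp: c_def\<close>)
    then show ?thesis using False by (simp add: eq)
  qed simp
qed

lemma AE_real_displacement_neq_0:
  "AE u in lborel_fun (profile_index w). \<forall>s \<in> sign_patterns w.
    (\<exists>a\<in>set w. letter_balance w s a \<noteq> 0) \<longrightarrow> real_displacement w u s \<noteq> 0"
proof (subst AE_finite_all, rule finite_sign_patterns, intro ballI)
  fix s
  show "AE u in lborel_fun (profile_index w).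
      (\<exists>a\<in>set w. letter_balance w s a \<noteq> 0) \<longrightarrow> real_displacement w u s \<noteq> 0"
    using AE_profile_form_neq[of "case_option 0 (\<lambda>a. real_of_int (letter_balance w s a))" w 0]
    by (cases "\<exists>a\<in>set w. letter_balance w s a \<noteq> 0") (auto simp: real_displacement_eq_sum_letters)
qed

lemma AE_real_walk_avoids_boundary:
  "AE u in lborel_fun (profile_index w). \<forall>s \<in> sign_patterns w. \<forall>j \<le> length w.
    real_walk w u s j \<noteq> 0 \<and> real_walk w u s j \<noteq> (if even j then y else 1)"
proof -
  have "AE u in lborel_fun (profile_index w). \<forall>s \<in> sign_patterns w. \<forall>j \<in> {..length w}.
    real_walk w u s j \<noteq> 0 \<and> real_walk w u s j \<noteq> (if even j then y else 1)"
  proof (subst AE_finite_all, rule finite_sign_patterns, intro ballI, subst AE_finite_all, simp, intro ballI)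
    fix s j assume j: "j \<in> {..length w}"
    let ?c = "case_option 1 (\<lambda>a. real_of_int (\<Sum>t \<in> {t. t < j \<and> w ! t = a}. step_sign (s ! t)))"
    have "AE u in lborel_fun (profile_index w). ?c None * u None + (\<Sum>a\<in>set w. ?c (Some a) * u (Some a)) \<noteq> 0"
      "AE u in lborel_fun (profile_index w).
         ?c None * u None + (\<Sum>a\<in>set w. ?c (Some a) * u (Some a)) \<noteq> (if even j then y else 1)"
      by (rule AE_profile_form_neq, simp)+
    then show "AE u in lborel_fun (profile_index w).
        real_walk w u s j \<noteq> 0 \<and> real_walk w u s j \<noteq> (if even j then y else 1)"
      using real_walk_eq_sum_letters[of j w] j by simp
  qed
  then show ?thesis by (simp add: Ball_def)
qed

lemma AE_generic_point: "AE u in lborel_fun (profile_index w). generic_point w y u"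
  using AE_letter_length_neq_0 AE_letter_lengths_distinct AE_real_displacement_neq_0
    AE_real_walk_avoids_boundary[of y]
  unfolding generic_point_def by eventually_elim blast

end


section \<open>Convergence of the fibre counts\<close>

context
  fixes w :: "nat list" and u :: "nat option \<Rightarrow> real" and z :: "nat \<Rightarrow> nat option \<Rightarrow> int"
    and p :: "nat \<Rightarrow> nat" and y :: real
  assumes z_def: "z = (\<lambda>n. grid_point (profile_index w) (Suc n) u)"
    and p_scaled: "(\<lambda>n. real (p (Suc n)) / real (Suc n)) \<longlonglongrightarrow> y"
    and generic: "generic_point w y u"
begin

lemma letter_length_scaled_tendsto:
  "a \<in> set w \<Longrightarrow> (\<lambda>n. real_of_int (z n (Some a)) / real (Suc n)) \<longlonglongrightarrow> u (Some a)"
  unfolding z_def by (rule grid_point_scaled_tendsto) (simp add: profile_index_def)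

lemma lattice_walk_scaled_tendsto:
  assumes "j \<le> length w"
  shows "(\<lambda>n. real_of_int (lattice_walk w (z n) s j) / real (Suc n)) \<longlonglongrightarrow> real_walk w u s j"
proof -
  have "real_of_int (lattice_walk w (z n) s j) / real (Suc n) = real_of_int (z n None) / real (Suc n)
     + (\<Sum>t<j. real_of_int (step_sign (s ! t)) * (real_of_int (z n (Some (w ! t))) / real (Suc n)))" for n
    by (simp add: lattice_walk_def add_divide_distrib sum_divide_distrib)
  moreover have "(\<lambda>n. real_of_int (z n None) / real (Suc n)) \<longlonglongrightarrow> u None"
    unfolding z_def by (rule grid_point_scaled_tendsto) (simp add: profile_index_def)
  ultimately show ?thesis unfolding real_walk_def using assms
    by (simp only:) (intro tendsto_add tendsto_sum tendsto_mult_left letter_length_scaled_tendsto, auto)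
qed

lemma displacement_scaled_tendsto:
  "(\<lambda>n. real_of_int (\<Sum>t<length w. step_sign (s ! t) * z n (Some (w ! t))) / real (Suc n))
    \<longlonglongrightarrow> real_displacement w u s"
proof -
  have "real_of_int (\<Sum>t<length w. step_sign (s ! t) * z n (Some (w ! t))) / real (Suc n)
     = (\<Sum>t<length w. real_of_int (step_sign (s ! t)) * (real_of_int (z n (Some (w ! t))) / real (Suc n)))"
    for n
    by (simp add: sum_divide_distrib)
  then show ?thesis unfolding real_displacement_def
    by (simp only:) (intro tendsto_sum tendsto_mult_left letter_length_scaled_tendsto, auto)
qed

lemma eventually_walk_in_strip_iff:
  assumes s: "s \<in> sign_patterns w" and j: "j \<le> length w"
  shows "eventually (\<lambda>n.
    (1 \<le> lattice_walk w (z n) s j \<and> lattice_walk w (z n) s j \<le> int (if even j then p (Suc n) else Suc n))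
    \<longleftrightarrow> (0 < real_walk w u s j \<and> real_walk w u s j < (if even j then y else 1))) sequentially"
proof -
  have nz: "real_walk w u s j \<noteq> 0" "real_walk w u s j - (if even j then y else 1) \<noteq> 0"
    using generic s j unfolding generic_point_def by auto
  have lower: "eventually (\<lambda>n. lattice_walk w (z n) s j \<le> 0 \<longleftrightarrow> real_walk w u s j < 0) sequentially"
    by (rule eventually_scaled_nonpos_iff[OF lattice_walk_scaled_tendsto[OF j] nz(1)])
  define bound where "bound n = int (if even j then p (Suc n) else Suc n)" for n
  have "(\<lambda>n. real_of_int (bound n) / real (Suc n)) \<longlonglongrightarrow> (if even j then y else 1)"
    using p_scaled by (cases "even j") (auto simp: bound_def simp del: of_nat_Suc)
  then have "(\<lambda>n. real_of_int (lattice_walk w (z n) s j - bound n) / real (Suc n))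
      \<longlonglongrightarrow> real_walk w u s j - (if even j then y else 1)"
    using tendsto_diff[OF lattice_walk_scaled_tendsto[OF j]] by (simp add: diff_divide_distrib)
  from eventually_scaled_nonpos_iff[OF this nz(2)]
  have upper: "eventually (\<lambda>n. lattice_walk w (z n) s j \<le> bound n \<longleftrightarrow>
      real_walk w u s j < (if even j then y else 1)) sequentially"
    by (auto elim!: eventually_mono)
  from lower upper show ?thesis unfolding bound_def by eventually_elim (use nz(1) in auto)
qed

lemma eventually_admissible_iff:
  assumes s: "s \<in> sign_patterns w"
  shows "eventually (\<lambda>n. admissible w (p (Suc n)) (Suc n) (z n) s \<longleftrightarrow> real_admissible w y u s) sequentially"
proof -
  have closes: "eventually (\<lambda>n. (\<Sum>t<length w. step_sign (s ! t) * z n (Some (w ! t))) = 0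
      \<longleftrightarrow> real_displacement w u s = 0) sequentially"
  proof (cases "\<exists>a\<in>set w. letter_balance w s a \<noteq> 0")
    case True
    then have "real_displacement w u s \<noteq> 0" using generic s unfolding generic_point_def by blast
    then show ?thesis
      using eventually_scaled_neq_0[OF displacement_scaled_tendsto] by (auto elim: eventually_mono)
  next
    case False
    then have "(\<Sum>t<length w. step_sign (s ! t) * z n (Some (w ! t))) = 0" for n
      using sum_group_by_letter[of "length w" w "\<lambda>t. step_sign (s ! t)" "z n \<circ> Some"]
      by (simp add: letter_balance_def)
    moreover have "real_displacement w u s = 0" using False by (simp add: real_displacement_eq_sum_letters)
    ultimately show ?thesis by simp
  qed
  have "eventually (\<lambda>n. \<forall>j\<in>{..length w}.
    (1 \<le> lattice_walk w (z n) s j \<and> lattice_walk w (z n) s j \<le> int (if even j then p (Suc n) else Suc n))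
    \<longleftrightarrow> (0 < real_walk w u s j \<and> real_walk w u s j < (if even j then y else 1))) sequentially"
    using eventually_walk_in_strip_iff[OF s] by (intro eventually_ball_finite) auto
  with closes show ?thesis
    by eventually_elim (use s in \<open>auto simp: admissible_def real_admissible_def sign_patterns_def\<close>)
qed

lemma eventually_letter_lengths_pos:
  assumes "\<forall>a\<in>set w. 0 < u (Some a)"
  shows "eventually (\<lambda>n. \<forall>a\<in>set w. 1 \<le> z n (Some a)) sequentially"
proof (intro eventually_ball_finite ballI, simp)
  fix a assume "a \<in> set w"
  with assms eventually_scaled_pos[OF letter_length_scaled_tendsto[OF this]]
  show "eventually (\<lambda>n. 1 \<le> z n (Some a)) sequentially" by (auto elim: eventually_mono)
qed

lemma eventually_letter_lengths_distinct:
  "eventually (\<lambda>n. \<forall>a\<in>set w. \<forall>a'\<in>set w. a \<noteq> a' \<longrightarrow> z n (Some a) \<noteq> z n (Some a')) sequentially"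
proof (intro eventually_ball_finite ballI finite_set)
  fix a a' assume a: "a \<in> set w" "a' \<in> set w"
  show "\<forall>\<^sub>F n in sequentially. a \<noteq> a' \<longrightarrow> z n (Some a) \<noteq> z n (Some a')"
  proof (cases "a = a'")
    case False
    have "(\<lambda>n. real_of_int (z n (Some a) - z n (Some a')) / real (Suc n)) \<longlonglongrightarrow> u (Some a) - u (Some a')"
      using tendsto_diff[OF letter_length_scaled_tendsto[OF a(1)] letter_length_scaled_tendsto[OF a(2)]]
      by (simp add: diff_divide_distrib)
    moreover have "u (Some a) - u (Some a') \<noteq> 0"
      using a False generic unfolding generic_point_def by auto
    ultimately have "\<forall>\<^sub>F n in sequentially. z n (Some a) - z n (Some a') \<noteq> 0"
      by (rule eventually_scaled_neq_0)
    then show ?thesis by (auto elim!: eventually_mono)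
  qed simp
qed

lemma eventually_card_profile_fibre_eq_limit_count:
  assumes lw: "even (length w)" and pos: "\<forall>a\<in>set w. 0 < u (Some a)"
  shows "eventually (\<lambda>n. real (card (profile_fibre w (p (Suc n)) (Suc n) (z n))) = limit_count w y u)
    sequentially"
proof -
  note eventually_letter_lengths_pos[OF pos] eventually_letter_lengths_distinct
  moreover have "eventually (\<lambda>n. \<forall>s\<in>sign_patterns w.
      admissible w (p (Suc n)) (Suc n) (z n) s \<longleftrightarrow> real_admissible w y u s) sequentially"
    by (rule eventually_ball_finite[OF finite_sign_patterns]) (use eventually_admissible_iff in blast)
  ultimately show ?thesis
  proof eventually_elim
    case (elim n)
    have "z n \<in> extensional (profile_index w)" by (simp add: z_def grid_point_def)
    moreover have "inj_on (\<lambda>a. z n (Some a)) (set w)" using elim(2) by (auto simp: inj_on_def)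
    ultimately have "card (profile_fibre w (p (Suc n)) (Suc n) (z n)) =
        card {s. admissible w (p (Suc n)) (Suc n) (z n) s}"
      using card_profile_fibre_eq[OF lw _ elim(1)] by blast
    moreover have "admissible w (p (Suc n)) (Suc n) (z n) s = real_admissible w y u s" for s
      using elim(3) by (cases "s \<in> sign_patterns w")
        (auto simp: sign_patterns_def admissible_def real_admissible_def)
    ultimately show ?case using pos by (simp add: limit_count_def)
  qed
qed

lemma card_profile_fibre_tendsto:
  assumes lw: "even (length w)"
  shows "(\<lambda>n. real (card (profile_fibre w (p (Suc n)) (Suc n) (z n)))) \<longlonglongrightarrow> limit_count w y u"
proof (cases "\<forall>a\<in>set w. 0 < u (Some a)")
  case True
  then show ?thesis by (rule tendsto_eventually[OF eventually_card_profile_fibre_eq_limit_count[OF lw]])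
next
  case False
  then obtain a where a: "a \<in> set w" "u (Some a) < 0"
    using generic unfolding generic_point_def by force
  have "eventually (\<lambda>n. profile_fibre w (p (Suc n)) (Suc n) (z n) = {}) sequentially"
    using eventually_scaled_neg[OF letter_length_scaled_tendsto[OF a(1)] a(2)]
  proof eventually_elim
    case (elim n)
    show ?case
    proof (rule ccontr)
      assume "profile_fibre w (p (Suc n)) (Suc n) (z n) \<noteq> {}"
      then have "z n \<in> profile w ` Pi_S L_T (p (Suc n)) (Suc n) w"
        unfolding profile_fibre_def by (auto intro: image_eqI[OF sym])
      with profile_bounded[OF lw this] a(1) elim show False by (auto simp: profile_index_def)
    qed
  qed
  then show ?thesis
    using False by (auto simp: limit_count_def elim!: eventually_mono intro: tendsto_eventually)
qed

end


section \<open>The integral of the limit density\<close>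

lemma limit_count_eq_sum:
  "limit_count w y u = (\<Sum>s\<in>sign_patterns w.
     if (\<forall>a\<in>set w. 0 < u (Some a)) \<and> real_displacement w u s = 0 \<and>
        (\<forall>j \<in> {..length w}. 0 < real_walk w u s j \<and> real_walk w u s j < (if even j then y else 1))
     then 1 else 0)"
proof -
  have "{s. real_admissible w y u s} = {s \<in> sign_patterns w. real_displacement w u s = 0 \<and>
     (\<forall>j \<in> {..length w}. 0 < real_walk w u s j \<and> real_walk w u s j < (if even j then y else 1))}"
    by (auto simp: real_admissible_def sign_patterns_def)
  then show ?thesis
    using finite_sign_patterns[of w] by (simp add: limit_count_def sum.If_cases Int_def)
qed

lemma measurable_component_lborel_fun: "(\<lambda>u. u i) \<in> borel_measurable (lborel_fun I)"
proof (cases "i \<in> I")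
  case True then show ?thesis using measurable_component_singleton[of i I "\<lambda>_. lborel"] by simp
next
  case False
  have "(\<lambda>_. undefined :: real) \<in> borel_measurable (lborel_fun I)" by simp
  then show ?thesis
    by (rule measurable_cong[THEN iffD1, rotated]) (use False in \<open>auto simp: space_PiM PiE_def extensional_def\<close>)
qed

lemma limit_count_measurable: "limit_count w y \<in> borel_measurable (lborel_fun (profile_index w))"
proof -
  have [measurable]: "(\<lambda>u. u (Some a)) \<in> borel_measurable (lborel_fun (profile_index w))"
    "(\<lambda>u. real_displacement w u s) \<in> borel_measurable (lborel_fun (profile_index w))"
    "(\<lambda>u. real_walk w u s j) \<in> borel_measurable (lborel_fun (profile_index w))" for a s j
    unfolding real_displacement_def real_walk_def
    by (intro borel_measurable_add borel_measurable_sum borel_measurable_times borel_measurable_const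
        measurable_component_lborel_fun)+
  show ?thesis unfolding limit_count_eq_sum[abs_def] by measurable
qed

text \<open>In the alternating pattern every letter has contributed \<open>0\<close> or \<open>1\<close> times its step length
 so far, so the walk stays between \<open>u(None) > 0\<close> and the total of all coordinates.\<close>

lemma one_le_limit_count:
  assumes even: "even_word w" and pos: "0 < u None" "\<forall>a\<in>set w. 0 < u (Some a)"
    and small: "u None + (\<Sum>a\<in>set w. u (Some a)) < min y 1"
  shows "1 \<le> limit_count w y u"
proof -
  let ?s = "alternating_signs w"
  have "0 < real_walk w u ?s j \<and> real_walk w u ?s j < (if even j then y else 1)" if j: "j \<le> length w" for j
  proof -
    let ?odd = "\<lambda>a. real_of_int (if odd (count_list (take j w) a) then 1 else 0)"
    have "real_walk w u ?s j = u None + (\<Sum>a\<in>set w. ?odd a * u (Some a))"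
      using real_walk_eq_sum_letters[OF j, of u ?s] partial_balance_alternating_signs[OF j] by simp
    moreover have "0 \<le> (\<Sum>a\<in>set w. ?odd a * u (Some a))"
      using pos by (intro sum_nonneg) (auto simp: less_imp_le)
    moreover have "(\<Sum>a\<in>set w. ?odd a * u (Some a)) \<le> (\<Sum>a\<in>set w. u (Some a))"
      using pos by (intro sum_mono) (auto simp: less_imp_le)
    ultimately show ?thesis using pos small by auto
  qed
  moreover have "real_displacement w u ?s = 0"
    using letter_balance_alternating_signs[OF even] by (simp add: real_displacement_eq_sum_letters)
  ultimately have "real_admissible w y u ?s"
    by (simp add: real_admissible_def length_alternating_signs)
  moreover have "finite {s. real_admissible w y u s}"
    by (rule finite_subset[OF _ finite_sign_patterns[of w]])
      (auto simp: sign_patterns_def real_admissible_def)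
  ultimately have "1 \<le> card {s. real_admissible w y u s}"
    by (metis One_nat_def Suc_leI card_gt_0_iff empty_iff mem_Collect_eq)
  then show ?thesis using pos by (simp add: limit_count_def)
qed

lemma integral_limit_count_pos:
  assumes even: "even_word w" and y: "0 < y"
    and int: "integrable (lborel_fun (profile_index w)) (limit_count w y)"
  shows "0 < integral\<^sup>L (lborel_fun (profile_index w)) (limit_count w y)"
proof -
  let ?M = "lborel_fun (profile_index w)"
  define \<epsilon> where "\<epsilon> = min y 1 / real (Suc (card (set w)))"
  have \<epsilon>: "0 < \<epsilon>" using y by (simp add: \<epsilon>_def)
  define box where "box = PiE (profile_index w) (\<lambda>_. {0<..<\<epsilon>})"
  interpret product_sigma_finite "\<lambda>_::nat option. lborel :: real measure"
    by (rule product_sigma_finite_lborel)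
  have box_sets: "box \<in> sets ?M"
    unfolding box_def by (intro sets_PiM_I_finite) (auto simp: finite_profile_index)
  have "emeasure ?M box = (\<Prod>i\<in>profile_index w. emeasure lborel {0<..<\<epsilon>})"
    unfolding box_def by (rule emeasure_PiM) (auto simp: finite_profile_index)
  also have "\<dots> = ennreal \<epsilon> ^ card (profile_index w)" using \<epsilon> by simp
  finally have emeasure_box: "emeasure ?M box = ennreal (\<epsilon> ^ card (profile_index w))"
    using \<epsilon> by (simp add: ennreal_power)
  have "indicator box u \<le> limit_count w y u" for u
  proof (cases "u \<in> box")
    case True
    then have coords: "0 < u i" "u i < \<epsilon>" if "i \<in> profile_index w" for i
      using that by (auto simp: box_def PiE_iff)
    have "u None + (\<Sum>a\<in>set w. u (Some a)) < \<epsilon> + (\<Sum>a\<in>set w. \<epsilon>)"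
      using coords by (intro add_less_le_mono sum_mono) (auto simp: profile_index_def less_imp_le)
    also have "\<dots> = real (Suc (card (set w))) * \<epsilon>" by (simp add: algebra_simps)
    also have "\<dots> = min y 1" by (simp add: \<epsilon>_def)
    finally show ?thesis
      using True one_le_limit_count[OF even] coords by (simp add: profile_index_def)
  qed (simp add: limit_count_def)
  then have "integral\<^sup>L ?M (indicator box :: _ \<Rightarrow> real) \<le> integral\<^sup>L ?M (limit_count w y)"
    using box_sets emeasure_box by (intro integral_mono[OF _ int]) (auto intro: integrable_real_indicator)
  moreover have "integral\<^sup>L ?M (indicator box :: _ \<Rightarrow> real) = \<epsilon> ^ card (profile_index w)"
    using box_sets emeasure_box \<epsilon> by (simp add: measure_def)
  moreover have "0 < \<epsilon> ^ card (profile_index w)" using \<epsilon> by simp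
  ultimately show ?thesis by linarith
qed

lemma integral_limit_count_eq_0:
  assumes "\<not> even_word w"
  shows "integral\<^sup>L (lborel_fun (profile_index w)) (limit_count w y) = 0"
proof (rule integral_eq_zero_AE)
  obtain a where a: "a \<in> set w" "odd (count_list w a)" using assms unfolding even_word_def by auto
  show "AE u in lborel_fun (profile_index w). limit_count w y u = 0"
    using AE_generic_point[of w y]
  proof eventually_elim
    case (elim u)
    have "\<not> real_admissible w y u s" for s
    proof
      assume "real_admissible w y u s"
      then have "s \<in> sign_patterns w" "real_displacement w u s = 0"
        by (auto simp: real_admissible_def sign_patterns_def)
      moreover have "letter_balance w s a \<noteq> 0" by (rule letter_balance_neq_0_if_odd[OF a(2)])
      ultimately show False using elim a(1) unfolding generic_point_def by blast
    qed
    then show ?case by (simp add: limit_count_def)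
  qed
qed


section \<open>Asymptotics of the circuit count\<close>

lemma num_even_generating_le: "num_even_generating w \<le> Suc (card (set w))"
proof -
  define firsts where "firsts = {i. 1 \<le> i \<and> i \<le> length w \<and> w ! (i - 1) \<notin> set (take (i - 1) w)}"
  have "inj_on (\<lambda>i. w ! (i - 1)) firsts"
  proof (rule inj_onI, rule ccontr)
    fix i j assume i: "i \<in> firsts" and j: "j \<in> firsts" and eq: "w ! (i - 1) = w ! (j - 1)" and "i \<noteq> j"
    then consider "i < j" | "j < i" by linarith
    then show False
    proof cases
      case 1
      then have "w ! (i - 1) \<in> set (take (j - 1) w)" using i j
        by (auto simp: firsts_def in_set_conv_nth intro!: exI[of _ "i - 1"])
      then show False using j eq by (simp add: firsts_def)
    next
      case 2
      then have "w ! (j - 1) \<in> set (take (i - 1) w)" using i j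
        by (auto simp: firsts_def in_set_conv_nth intro!: exI[of _ "j - 1"])
      then show False using i eq by (simp add: firsts_def)
    qed
  qed
  moreover have "(\<lambda>i. w ! (i - 1)) ` firsts \<subseteq> set w" by (auto simp: firsts_def)
  ultimately have firsts_le: "card firsts \<le> card (set w)" by (simp add: card_inj_on_le)
  have fin: "finite firsts" unfolding firsts_def by (rule finite_subset[of _ "{..length w}"]) auto
  have "num_even_generating w \<le> card (insert 0 firsts)"
    unfolding num_even_generating_def
    by (rule card_mono) (use fin in \<open>auto simp: generating_def firsts_def\<close>)
  also have "\<dots> \<le> Suc (card firsts)" by (simp add: card_insert_if fin)
  finally show ?thesis using firsts_le by simp
qed

lemma profile_image_bounded:
  assumes "even (length w)" and "real (max P N) \<le> M"
  shows "profile w ` Pi_S L_T P N w \<subseteq>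
    {z \<in> extensional (profile_index w). \<forall>i\<in>profile_index w. 0 \<le> z i \<and> real_of_int (z i) \<le> M}"
proof
  fix z assume "z \<in> profile w ` Pi_S L_T P N w"
  then have z: "z \<in> extensional (profile_index w)"
    "\<And>i. i \<in> profile_index w \<Longrightarrow> 0 \<le> z i \<and> z i \<le> int (max P N)"
    using profile_bounded[OF assms(1)] by blast+
  have "real_of_int (z i) \<le> M" if "i \<in> profile_index w" for i
    using z(2)[OF that] of_int_le_iff[of "z i" "int (max P N)"] assms(2) by simp
  with z show "z \<in> {z \<in> extensional (profile_index w).
    \<forall>i\<in>profile_index w. 0 \<le> z i \<and> real_of_int (z i) \<le> M}" by auto
qed

lemma AE_card_profile_fibre_tendsto:
  assumes "even (length w)" and "(\<lambda>n. real (p (Suc n)) / real (Suc n)) \<longlonglongrightarrow> y"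
  shows "AE u in lborel_fun (profile_index w).
    (\<lambda>n. real (card (profile_fibre w (p (Suc n)) (Suc n) (grid_point (profile_index w) (Suc n) u))))
      \<longlonglongrightarrow> limit_count w y u"
  using AE_generic_point[of w y]
  by eventually_elim (rule card_profile_fibre_tendsto[OF refl assms(2) _ assms(1)])

lemma
  fixes p :: "nat \<Rightarrow> nat"
  assumes even_length: "even (length w)"
    and p_scaled: "(\<lambda>n. real (p (Suc n)) / real (Suc n)) \<longlonglongrightarrow> y"
  shows integrable_limit_count: "integrable (lborel_fun (profile_index w)) (limit_count w y)"
    and card_Pi_S_scaled_tendsto:
      "(\<lambda>n. real (card (Pi_S L_T (p (Suc n)) (Suc n) w)) / real (Suc n) ^ Suc (card (set w)))
        \<longlonglongrightarrow> integral\<^sup>L (lborel_fun (profile_index w)) (limit_count w y)"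
proof -
  define Z where "Z n = profile w ` Pi_S L_T (p (Suc n)) (Suc n) w" for n
  define g where "g n z = real (card (profile_fibre w (p (Suc n)) (Suc n) z))" for n z
  obtain C where C: "\<And>n. real (max (p (Suc n)) (Suc n)) \<le> C * real (Suc n)"
    using linear_bound_of_scaled_tendsto[OF p_scaled] by blast
  have Z_bounded: "Z n \<subseteq> {z \<in> extensional (profile_index w).
      \<forall>i\<in>profile_index w. 0 \<le> z i \<and> real_of_int (z i) \<le> C * real (Suc n)}" for n
    unfolding Z_def by (rule profile_image_bounded[OF even_length C])
  have g_bounded: "0 \<le> g n z \<and> g n z \<le> 2 ^ length w" for n z
    using card_profile_fibre_le[OF even_length, of "p (Suc n)" "Suc n" z] unfolding g_def
    by (simp flip: of_nat_power)
  have "profile_fibre w (p (Suc n)) (Suc n) z = {}" if "z \<notin> Z n" for n z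
    using that unfolding Z_def profile_fibre_def by force
  then have "(if z \<in> Z n then g n z else 0) = real (card (profile_fibre w (p (Suc n)) (Suc n) z))"
    for n z by (simp add: g_def)
  with AE_card_profile_fibre_tendsto[OF even_length p_scaled]
  have lim: "AE u in lborel_fun (profile_index w).
      (\<lambda>n. if grid_point (profile_index w) (Suc n) u \<in> Z n
         then g n (grid_point (profile_index w) (Suc n) u) else 0) \<longlonglongrightarrow> limit_count w y u"
    by simp
  have fin_Z: "finite (Z n)" for n unfolding Z_def using finite_Pi_S[OF even_length] by simp
  have sum_eq: "(\<Sum>z\<in>Z n. g n z) = real (card (Pi_S L_T (p (Suc n)) (Suc n) w))" for n
    unfolding Z_def g_def card_Pi_S_eq_sum_fibres[OF even_length] by simp
  note grid = finite_profile_index[of w] fin_Z Z_bounded g_bounded limit_count_measurable lim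
  show "integrable (lborel_fun (profile_index w)) (limit_count w y)"
    by (rule integrable_grid_limit[OF grid])
  show "(\<lambda>n. real (card (Pi_S L_T (p (Suc n)) (Suc n) w)) / real (Suc n) ^ Suc (card (set w)))
      \<longlonglongrightarrow> integral\<^sup>L (lborel_fun (profile_index w)) (limit_count w y)"
    using grid_sum_tendsto_integral[OF grid] unfolding sum_eq card_profile_index .
qed

lemma tendsto_renormalise:
  fixes a p :: "nat \<Rightarrow> nat"
  assumes a_scaled: "(\<lambda>n. real (a (Suc n)) / real (Suc n) ^ Suc b) \<longlonglongrightarrow> J"
    and p_scaled: "(\<lambda>n. real (p (Suc n)) / real (Suc n)) \<longlonglongrightarrow> y" and "y \<noteq> 0" and "r \<le> b"
  shows "(\<lambda>n. real (a n) / (real (p n) ^ (r + 1) * real n ^ (b - r))) \<longlonglongrightarrow> J / y ^ (r + 1)"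
proof (rule LIMSEQ_imp_Suc)
  have eq: "real (a (Suc n)) / real (Suc n) ^ Suc b / (real (p (Suc n)) / real (Suc n)) ^ (r + 1) =
      real (a (Suc n)) / (real (p (Suc n)) ^ (r + 1) * real (Suc n) ^ (b - r))" for n
  proof -
    have "A / N ^ ((r + 1) + (b - r)) / (P / N) ^ (r + 1) = A / (P ^ (r + 1) * N ^ (b - r))"
      if "0 < N" for A P N :: real
      using that by (cases "P = 0") (simp_all add: power_add power_divide field_simps)
    moreover have "Suc b = (r + 1) + (b - r)" using \<open>r \<le> b\<close> by simp
    ultimately show ?thesis by (metis of_nat_0_less_iff zero_less_Suc)
  qed
  have "(\<lambda>n. real (a (Suc n)) / real (Suc n) ^ Suc b / (real (p (Suc n)) / real (Suc n)) ^ (r + 1))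
      \<longlonglongrightarrow> J / y ^ (r + 1)"
    using assms by (intro tendsto_divide tendsto_power) auto
  then show "(\<lambda>n. real (a (Suc n)) / (real (p (Suc n)) ^ (r + 1) * real (Suc n) ^ (b - r)))
      \<longlonglongrightarrow> J / y ^ (r + 1)"
    unfolding eq .
qed

theorem lemma5p4:
  fixes p :: "nat \<Rightarrow> nat" and y :: real and w :: "nat list" and k b r :: nat
  assumes "(\<lambda>n. real (p n) / real n) \<longlonglongrightarrow> y" and "0 < y"
    and "is_word w" and "length w = 2 * k"
    and "num_letters w = b" and "num_even_generating w = r + 1"
  shows "\<exists>c. (\<lambda>n. real (card (Pi_S L_T (p n) n w))
                 / (real (p n) ^ (r + 1) * real n ^ (b - r))) \<longlonglongrightarrow> c
          \<and> (even_word w \<longrightarrow> c > 0) \<and> (\<not> even_word w \<longrightarrow> c = 0)"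
proof -
  define J where "J = integral\<^sup>L (lborel_fun (profile_index w)) (limit_count w y)"
  have b: "card (set w) = b" and "r \<le> b"
    using assms(5,6) num_even_generating_le[of w] by (auto simp: num_letters_def)
  have even_length: "even (length w)" using assms(4) by simp
  have p_scaled: "(\<lambda>n. real (p (Suc n)) / real (Suc n)) \<longlonglongrightarrow> y"
    using LIMSEQ_Suc[OF assms(1)] by simp
  have "(\<lambda>n. real (card (Pi_S L_T (p n) n w)) / (real (p n) ^ (r + 1) * real n ^ (b - r)))
      \<longlonglongrightarrow> J / y ^ (r + 1)"
    using card_Pi_S_scaled_tendsto[OF even_length p_scaled] assms(2) \<open>r \<le> b\<close>
    unfolding J_def b by (intro tendsto_renormalise[OF _ p_scaled]) auto
  moreover have "even_word w \<Longrightarrow> 0 < J"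
    unfolding J_def
    using integral_limit_count_pos assms(2) integrable_limit_count[OF even_length p_scaled] by blast
  moreover have "\<not> even_word w \<Longrightarrow> J = 0"
    unfolding J_def by (rule integral_limit_count_eq_0)
  ultimately show ?thesis using assms(2) by (intro exI[of _ "J / y ^ (r + 1)"]) auto
qed

end
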